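(* Consider the linear time-invariant system $\dot{x}(t) = A x(t) + B u(t) + E w(t)$ with $A \in \mathbb{R}^{n\times n}$, $B \in \mathbb{R}^{n\times m}$, $E \in \mathbb{R}^{n\times r}$, input set $\mathcal{U}\subset\mathbb{R}^m$ and disturbance set $\mathcal{W}\subset\mathbb{R}^r$ (both zonotopes), and a target set $\mathcal{X}_{\text{end}}\subset\mathbb{R}^n$ given as a polytope. For every time $t\in[0,t_{\text{end}}]$, the time-point EA backward reachable set $$\mathcal{R}^{\exists\forall}(-t) := \big\{ x_0 \in \mathbb{R}^n \,\big|\, \exists u(\cdot)\in\mathbb{U}\; \forall w(\cdot)\in\mathbb{W}\colon \xi(t;x_0,u(\cdot),w(\cdot)) \in \mathcal{X}_{\text{end}} \big\}$$ satisfies $$\mathcal{R}^{\exists\forall}(-t) = e^{-At}\Big( \big( \mathcal{X}_{\text{end}} \ominus \mathcal{Z}_{\mathcal{W}}(t) \big) \oplus -\mathcal{Z}_{\mathcal{U}}(t) \Big).$$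
   Context: $\mathbb{U}$ is the set of all (measurable) input trajectories $u:[0,t_{\text{end}}]\to\mathcal{U}$ and $\mathbb{W}$ the set of all (measurable) disturbance trajectories $w:[0,t_{\text{end}}]\to\mathcal{W}$. $\xi(t;x_0,u(\cdot),w(\cdot)) = e^{At}x_0 + \int_0^t e^{A(t-\theta)}(Bu(\theta)+Ew(\theta))\,\mathrm{d}\theta$ is the solution at time $t$. For a set $\mathcal{S}\subset\mathbb{R}^n$, the particular solution is $\mathcal{Z}_{\mathcal{S}}(t) := \{\int_0^t e^{A(t-\theta)} s(\theta)\,\mathrm{d}\theta \mid s(\theta)\in\mathcal{S}\}$ (over measurable $s$), and $\mathcal{Z}_{\mathcal{U}}(t) := \mathcal{Z}_{B\mathcal{U}}(t)$, $\mathcal{Z}_{\mathcal{W}}(t) := \mathcal{Z}_{E\mathcal{W}}(t)$. Set operations: $M\mathcal{S} = \{Ms \mid s\in\mathcal{S}\}$; $-\mathcal{S} = \{-s\mid s\in\mathcal{S}\}$; Minkowski sum $\mathcal{S}_1\oplus\mathcal{S}_2 = \{s_1+s_2\mid s_1\in\mathcal{S}_1, s_2\in\mathcal{S}_2\}$; Minkowski difference $\mathcal{S}_1\ominus\mathcal{S}_2 = \{s \mid \{s\}\oplus\mathcal{S}_2\subseteq\mathcal{S}_1\}$. A zonotope is $\{c+\sum_{i=1}^{\gamma} G_{(\cdot,i)}\alpha_i \mid \alpha_i\in[-1,1]\}$; a polytope is $\{s \mid Ns\le d\}$. *)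

theory Defs
  imports "HOL-Analysis.Analysis"
begin

fun mat_pow :: "real^'n^'n \<Rightarrow> nat \<Rightarrow> real^'n^'n" where
  "mat_pow M 0 = mat 1"
| "mat_pow M (Suc k) = M ** mat_pow M k"

definition mat_exp :: "real^'n^'n \<Rightarrow> real^'n^'n" where
  "mat_exp M = (\<Sum>k. (1 / fact k) *\<^sub>R mat_pow M k)"

definition mink_sum :: "('a::ab_group_add) set \<Rightarrow> 'a set \<Rightarrow> 'a set" (infixl "\<oplus>\<^sub>M" 65) where
  "S1 \<oplus>\<^sub>M S2 = {s1 + s2 | s1 s2. s1 \<in> S1 \<and> s2 \<in> S2}"

definition mink_diff :: "('a::ab_group_add) set \<Rightarrow> 'a set \<Rightarrow> 'a set" (infixl "\<ominus>\<^sub>M" 65) where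
  "S1 \<ominus>\<^sub>M S2 = {s. {s} \<oplus>\<^sub>M S2 \<subseteq> S1}"

definition lin_image :: "real^'m^'n \<Rightarrow> (real^'m) set \<Rightarrow> (real^'n) set" where
  "lin_image M S = {M *v s | s. s \<in> S}"

definition zonotope :: "('a::real_vector) set \<Rightarrow> bool" where
  "zonotope S \<longleftrightarrow> (\<exists>c gs. S = {c + (\<Sum>i<length gs. \<alpha> i *\<^sub>R gs ! i) | \<alpha>. \<forall>i<length gs. \<bar>\<alpha> i\<bar> \<le> 1})"

definition polytope_H :: "('a::real_inner) set \<Rightarrow> bool" where
  "polytope_H S \<longleftrightarrow> (\<exists>rows :: ('a \<times> real) list. S = {s. \<forall>(a, b) \<in> set rows. a \<bullet> s \<le> b})"

definition trajectories :: "real \<Rightarrow> ('a::euclidean_space) set \<Rightarrow> (real \<Rightarrow> 'a) set" where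
  "trajectories T S = {f. f \<in> borel_measurable (lebesgue_on {0..T}) \<and> (\<forall>\<theta>\<in>{0..T}. f \<theta> \<in> S)}"

definition particular_solution :: "real^'n^'n \<Rightarrow> (real^'n) set \<Rightarrow> real \<Rightarrow> (real^'n) set" where
  "particular_solution A S t =
     {integral {0..t} (\<lambda>\<theta>. mat_exp ((t - \<theta>) *\<^sub>R A) *v s \<theta>) | s. s \<in> trajectories t S}"

definition xi :: "real^'n^'n \<Rightarrow> real^'m^'n \<Rightarrow> real^'r^'n \<Rightarrow> real \<Rightarrow> real^'n
                  \<Rightarrow> (real \<Rightarrow> real^'m) \<Rightarrow> (real \<Rightarrow> real^'r) \<Rightarrow> real^'n" where
  "xi A B E t x0 u w = mat_exp (t *\<^sub>R A) *v x0
     + integral {0..t} (\<lambda>\<theta>. mat_exp ((t - \<theta>) *\<^sub>R A) *v (B *v u \<theta> + E *v w \<theta>))"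

definition EA_backward_reach ::
  "real^'n^'n \<Rightarrow> real^'m^'n \<Rightarrow> real^'r^'n \<Rightarrow> (real^'m) set \<Rightarrow> (real^'r) set
   \<Rightarrow> (real^'n) set \<Rightarrow> real \<Rightarrow> real \<Rightarrow> (real^'n) set" where
  "EA_backward_reach A B E U W Xend t_end t =
     {x0. \<exists>u \<in> trajectories t_end U. \<forall>w \<in> trajectories t_end W. xi A B E t x0 u w \<in> Xend}"

end

theory Submission
  imports Defs
begin

(* By variation of constants, xi t x0 u w = e^(tA) x0 + (B-convolution of u) + (E-convolution of w),
   and the convolutions of input and disturbance trajectories range exactly over Z_U(t) and Z_W(t).
   For the input this needs, for every s with values in B U, some measurable u with values in U and
   B u = s: take the minimum-norm point of the fibre U \<inter> B^-1 {y}, a Borel function of y because U is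
   compact and convex. Then "\<exists>u \<forall>w" turns into e^(tA) x0 \<in> (X_end \<ominus> Z_W(t)) \<oplus> -Z_U(t), and e^(-tA)
   inverts e^(tA), which for the power series follows from a Cauchy product. *)

lemma sums_vec_iff:
  fixes f :: "nat \<Rightarrow> 'a::real_normed_vector^'n"
  shows "f sums a \<longleftrightarrow> (\<forall>i. (\<lambda>k. f k $ i) sums (a $ i))"
  unfolding sums_def by (auto intro: vec_tendstoI dest: tendsto_vec_nth)

lemma sums_matrix_iff:
  fixes F :: "nat \<Rightarrow> real^'m^'n"
  shows "F sums S \<longleftrightarrow> (\<forall>i j. (\<lambda>k. F k $ i $ j) sums (S $ i $ j))"
  by (simp add: sums_vec_iff)

lemma Cauchy_product_matrix_sums:
  fixes F :: "nat \<Rightarrow> real^'l^'n" and G :: "nat \<Rightarrow> real^'m^'l"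
  assumes F: "\<And>i j. summable (\<lambda>k. \<bar>F k $ i $ j\<bar>)" and G: "\<And>i j. summable (\<lambda>k. \<bar>G k $ i $ j\<bar>)"
  shows "(\<lambda>k. \<Sum>a\<le>k. F a ** G (k - a)) sums (suminf F ** suminf G)"
proof -
  have nth_suminf: "suminf H $ i $ j = (\<Sum>k. H k $ i $ j)"
    if "\<And>i j. summable (\<lambda>k. \<bar>H k $ i $ j\<bar>)" for H :: "nat \<Rightarrow> real^'q^'p" and i j
  proof -
    have "H sums (\<chi> i j. \<Sum>k. H k $ i $ j)"
      using that by (simp add: sums_matrix_iff summable_sums summable_rabs_cancel)
    then show ?thesis by (simp add: sums_iff)
  qed
  show ?thesis
  proof (unfold sums_matrix_iff, intro allI)
    fix i j
    have "(\<lambda>k. \<Sum>l\<in>UNIV. \<Sum>a\<le>k. F a $ i $ l * G (k - a) $ l $ j)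
        sums (\<Sum>l\<in>UNIV. (\<Sum>k. F k $ i $ l) * (\<Sum>k. G k $ l $ j))"
      using F G by (intro sums_sum Cauchy_product_sums) simp_all
    then show "(\<lambda>k. (\<Sum>a\<le>k. F a ** G (k - a)) $ i $ j) sums (suminf F ** suminf G) $ i $ j"
      by (simp add: matrix_matrix_mult_def nth_suminf F G sum.swap[of _ UNIV])
  qed
qed

lemma mat_pow_add: "mat_pow X a ** mat_pow X b = mat_pow X (a + b)"
  by (induction a) (auto simp: matrix_mul_assoc[symmetric])

lemma mat_pow_scaleR: "mat_pow (r *\<^sub>R X) k = r ^ k *\<^sub>R mat_pow X k"
  by (induction k) (auto simp: matrix_scalar_ac scalar_matrix_assoc mult.commute)

lemma abs_mat_pow_nth_le:
  fixes X :: "real^'n^'n"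
  shows "\<bar>mat_pow X k $ i $ j\<bar> \<le> (real CARD('n) * norm X) ^ k"
proof (induction k arbitrary: i j)
  case 0
  then show ?case by (simp add: mat_def)
next
  case (Suc k)
  have entry: "\<bar>X $ i $ l\<bar> \<le> norm X" for l
    by (rule order_trans[OF component_le_norm_cart Finite_Cartesian_Product.norm_nth_le])
  have "\<bar>mat_pow X (Suc k) $ i $ j\<bar> \<le> (\<Sum>l\<in>UNIV. \<bar>X $ i $ l\<bar> * \<bar>mat_pow X k $ l $ j\<bar>)"
    by (simp add: matrix_matrix_mult_def sum_abs[THEN order_trans] abs_mult)
  also have "\<dots> \<le> (\<Sum>l\<in>(UNIV::'n set). norm X * (real CARD('n) * norm X) ^ k)"
    using entry Suc by (intro sum_mono mult_mono) auto
  also have "\<dots> = (real CARD('n) * norm X) ^ Suc k"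
    by simp
  finally show ?case .
qed

lemma summable_mat_exp_nth:
  fixes X :: "real^'n^'n"
  shows "summable (\<lambda>k. \<bar>mat_pow X k $ i $ j / fact k\<bar>)"
proof (rule summable_comparison_test'[OF summable_exp_generic])
  fix k
  show "norm \<bar>mat_pow X k $ i $ j / fact k\<bar> \<le> (real CARD('n) * norm X) ^ k /\<^sub>R fact k"
    using abs_mat_pow_nth_le[of X k i j] by (simp add: divide_right_mono field_simps)
qed

lemma summable_mat_exp_series_nth:
  fixes X :: "real^'n^'n"
  shows "summable (\<lambda>k. \<bar>((1 / fact k) *\<^sub>R mat_pow X k) $ i $ j\<bar>)"
  using summable_mat_exp_nth[of X i j] by (simp add: divide_inverse mult.commute)

lemma sums_mat_exp: "(\<lambda>k. (1 / fact k) *\<^sub>R mat_pow X k) sums mat_exp X"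
proof -
  have "summable (\<lambda>k. mat_pow X k $ i $ j / fact k)" for i j
    by (rule summable_rabs_cancel[OF summable_mat_exp_nth])
  then have "(\<lambda>k. (1 / fact k) *\<^sub>R mat_pow X k) sums (\<chi> i j. \<Sum>k. mat_pow X k $ i $ j / fact k)"
    by (simp add: sums_matrix_iff summable_sums)
  then show ?thesis
    unfolding mat_exp_def by (simp add: sums_iff)
qed

lemma mat_exp_nth: "mat_exp X $ i $ j = (\<Sum>k. mat_pow X k $ i $ j / fact k)"
  using sums_mat_exp[of X] by (simp add: sums_matrix_iff sums_iff)

lemma alternating_inverse_fact_sum:
  "(\<Sum>a\<le>k. (-1::real) ^ a / (fact a * fact (k - a))) = (if k = 0 then 1 else 0)"
proof -
  have "(\<Sum>a\<le>k. (-1::real) ^ a / (fact a * fact (k - a))) = (\<Sum>a\<le>k. (-1) ^ a * of_nat (k choose a)) / fact k"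
    unfolding sum_divide_distrib by (intro sum.cong refl) (simp add: binomial_fact)
  also have "\<dots> = (if k = 0 then 1 else 0)"
    using choose_alternating_sum[of k, where 'a=real] by auto
  finally show ?thesis .
qed

lemma mat_exp_minus_mult:
  fixes X :: "real^'n^'n"
  shows "mat_exp (- X) ** mat_exp X = mat 1"
proof -
  have coefficient: "(\<Sum>a\<le>k. ((1 / fact a) *\<^sub>R mat_pow (- X) a) ** ((1 / fact (k - a)) *\<^sub>R mat_pow X (k - a)))
      = (if k = 0 then mat 1 else 0)" for k
  proof -
    have "((1 / fact a) *\<^sub>R mat_pow (- X) a) ** ((1 / fact (k - a)) *\<^sub>R mat_pow X (k - a))
        = ((-1) ^ a / (fact a * fact (k - a))) *\<^sub>R mat_pow X k" if "a \<le> k" for a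
      using mat_pow_scaleR[of "-1" X a] mat_pow_add[of X a "k - a"] that
      by (simp add: matrix_scalar_ac mult.commute flip: scalar_matrix_assoc)
    then have "(\<Sum>a\<le>k. ((1 / fact a) *\<^sub>R mat_pow (- X) a) ** ((1 / fact (k - a)) *\<^sub>R mat_pow X (k - a)))
        = (\<Sum>a\<le>k. (-1) ^ a / (fact a * fact (k - a))) *\<^sub>R mat_pow X k"
      by (simp add: scaleR_sum_left)
    then show ?thesis
      by (simp add: alternating_inverse_fact_sum)
  qed
  have "(\<lambda>k. if k = 0 then mat 1 else 0) sums (mat_exp (- X) ** mat_exp X)"
    using Cauchy_product_matrix_sums[OF summable_mat_exp_series_nth[of "- X"] summable_mat_exp_series_nth[of X]]
    unfolding coefficient sums_mat_exp[THEN sums_unique, symmetric] .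
  moreover have "(\<lambda>k. if k = 0 then mat 1 else 0) sums (mat 1 :: real^'n^'n)"
    using sums_single[of 0 "\<lambda>_. mat 1 :: real^'n^'n"] by simp
  ultimately show ?thesis
    by (rule sums_unique2)
qed

lemma continuous_on_mat_exp_scaleR:
  fixes A :: "real^'n^'n"
  shows "continuous_on S (\<lambda>r. mat_exp (r *\<^sub>R A))"
proof -
  have powser: "mat_exp (r *\<^sub>R A) $ i $ j = (\<Sum>k. (mat_pow A k $ i $ j / fact k) * r ^ k)" for r i j
    by (simp add: mat_exp_nth mat_pow_scaleR field_simps)
  have "summable (\<lambda>k. (mat_pow A k $ i $ j / fact k) * r ^ k)" for r i j
    using summable_rabs_cancel[OF summable_mat_exp_nth[of "r *\<^sub>R A" i j]]
    by (simp add: mat_pow_scaleR field_simps)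
  then have "continuous_on S (\<lambda>r. mat_exp (r *\<^sub>R A) $ i $ j)" for i j
    unfolding powser by (intro continuous_at_imp_continuous_on ballI isCont_powser_converges_everywhere)
  then have "continuous_on S (\<lambda>r. \<chi> i j. mat_exp (r *\<^sub>R A) $ i $ j)"
    by (intro continuous_on_vec_lambda)
  then show ?thesis
    by (simp add: vec_lambda_eta)
qed

lemma closed_linear_image_compact:
  fixes L :: "'a::euclidean_space \<Rightarrow> 'b::euclidean_space"
  assumes "bounded_linear L" "compact K"
  shows "closed (L ` K)"
  using assms by (intro compact_imp_closed compact_continuous_image linear_continuous_on)

lemma closed_convex_linear_fibre:
  fixes L :: "'a::euclidean_space \<Rightarrow> 'b::euclidean_space"
  assumes "bounded_linear L" "closed K" "convex K"
  shows "closed (K \<inter> L -` {y})" "convex (K \<inter> L -` {y})"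
  using assms
  by (auto intro: closed_Int continuous_closed_vimage linear_continuous_at convex_Int convex_linear_vimage
      bounded_linear.linear)

(* Restricting to rational levels q makes the right-hand side a countable condition on y. *)
lemma closest_point_fibre_in_closed_iff:
  fixes L :: "'a::euclidean_space \<Rightarrow> 'b::euclidean_space"
  assumes L: "bounded_linear L" and K: "compact K" "convex K" and y: "y \<in> L ` K" and C: "closed C"
  shows "closest_point (K \<inter> L -` {y}) 0 \<in> C \<longleftrightarrow>
    (\<forall>q\<in>\<rat>. y \<in> L ` (K \<inter> cball 0 q) \<longrightarrow> y \<in> L ` (K \<inter> C \<inter> cball 0 q))"
proof -
  define F where "F y = K \<inter> L -` {y}" for y
  have Fy: "closed (F y)" "convex (F y)" "F y \<noteq> {}"
    using closed_convex_linear_fibre[OF L compact_imp_closed[OF K(1)] K(2)] y unfolding F_def by auto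
  define p where "p = closest_point (F y) 0"
  have p: "p \<in> F y" "\<And>z. z \<in> F y \<Longrightarrow> norm p \<le> norm z"
    using closest_point_exists[OF Fy(1,3), of 0] unfolding p_def by auto
  show ?thesis
    unfolding F_def[symmetric] p_def[symmetric]
  proof
    assume "p \<in> C"
    show "\<forall>q\<in>\<rat>. y \<in> L ` (K \<inter> cball 0 q) \<longrightarrow> y \<in> L ` (K \<inter> C \<inter> cball 0 q)"
    proof (intro ballI impI)
      fix q assume "y \<in> L ` (K \<inter> cball 0 q)"
      then obtain z where "z \<in> F y" "norm z \<le> q"
        unfolding F_def by auto
      then have "p \<in> K \<inter> C \<inter> cball 0 q" "L p = y"
        using p \<open>p \<in> C\<close> unfolding F_def by fastforce+
      then show "y \<in> L ` (K \<inter> C \<inter> cball 0 q)"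
        by blast
    qed
  next
    assume H: "\<forall>q\<in>\<rat>. y \<in> L ` (K \<inter> cball 0 q) \<longrightarrow> y \<in> L ` (K \<inter> C \<inter> cball 0 q)"
    have small: "\<exists>z\<in>F y \<inter> C. norm z \<le> q" if "q \<in> \<rat>" "norm p < q" for q
    proof -
      have "y \<in> L ` (K \<inter> cball 0 q)"
        using p(1) that unfolding F_def by (force simp: image_iff)
      then show ?thesis
        using H that unfolding F_def by force
    qed
    obtain q where "q \<in> \<rat>" "norm p < q"
      using Rats_dense_in_real[of "norm p" "norm p + 1"] by auto
    then have FC: "closed (F y \<inter> C)" "F y \<inter> C \<noteq> {}"
      using small Fy(1) C by auto
    define u where "u = closest_point (F y \<inter> C) 0"
    have u: "u \<in> F y \<inter> C" "\<And>z. z \<in> F y \<inter> C \<Longrightarrow> norm u \<le> norm z"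
      using closest_point_exists[OF FC, of 0] unfolding u_def by auto
    have "norm u \<le> norm p"
    proof (rule ccontr)
      assume "\<not> norm u \<le> norm p"
      then obtain q where "q \<in> \<rat>" "norm p < q" "q < norm u"
        using Rats_dense_in_real[of "norm p" "norm u"] by auto
      then show False
        using small u(2) by fastforce
    qed
    then have "\<forall>z\<in>F y. dist 0 u \<le> dist 0 z"
      using p(2) by (force simp: dist_norm)
    then have "u = p"
      unfolding p_def using u(1) Fy by (intro closest_point_unique) auto
    then show "p \<in> C"
      using u(1) by blast
  qed
qed

lemma measurable_selection_linear_image:
  fixes L :: "'a::euclidean_space \<Rightarrow> 'b::euclidean_space"
  assumes L: "bounded_linear L" and K: "compact K" "convex K"
  obtains f where "f \<in> borel_measurable borel" "\<And>y. y \<in> L ` K \<Longrightarrow> f y \<in> K \<and> L (f y) = y"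
proof
  define f where "f y = closest_point (K \<inter> L -` {y}) 0" for y
  show "f y \<in> K \<and> L (f y) = y" if "y \<in> L ` K" for y
    using closest_point_in_set[OF closed_convex_linear_fibre(1)[OF L compact_imp_closed[OF K(1)] K(2)], of y 0]
      that unfolding f_def by blast
  have closed_preimage: "f -` C \<in> sets borel" if C: "closed C" for C
  proof -
    define G where "G = (\<Inter>q\<in>\<rat>. - L ` (K \<inter> cball 0 q) \<union> L ` (K \<inter> C \<inter> cball 0 q))"
    have "G \<in> sets borel"
      unfolding G_def using L K C
      by (intro sets.countable_INT'' countable_rat sets.Un borel_comp borel_closed
          closed_linear_image_compact compact_Int_closed) auto
    moreover have "closed (L ` K)"
      using L K(1) by (rule closed_linear_image_compact)
    moreover have "f -` C = (L ` K \<inter> G) \<union> (if closest_point {} 0 \<in> C then - L ` K else {})"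
    proof (intro set_eqI)
      fix y
      show "y \<in> f -` C \<longleftrightarrow> y \<in> (L ` K \<inter> G) \<union> (if closest_point {} 0 \<in> C then - L ` K else {})"
      proof (cases "y \<in> L ` K")
        case True
        then show ?thesis
          using closest_point_fibre_in_closed_iff[OF L K True C] by (auto simp: f_def G_def)
      next
        case False
        then have "K \<inter> L -` {y} = {}"
          by blast
        with False show ?thesis
          by (simp add: f_def)
      qed
    qed
    ultimately show ?thesis
      by auto
  qed
  show "f \<in> borel_measurable borel"
  proof (unfold borel_measurable_iff_halfspace_le, intro ballI allI)
    fix i :: 'a and a :: real
    have "{y \<in> space borel. f y \<bullet> i \<le> a} = f -` {x. x \<bullet> i \<le> a}"
      by auto
    then show "{y \<in> space borel. f y \<bullet> i \<le> a} \<in> sets borel"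
      using closed_preimage[OF closed_halfspace_component_le] by simp
  qed
qed

lemma compact_convex_generator_sums:
  fixes g :: "nat \<Rightarrow> 'a::euclidean_space"
  shows "compact {\<Sum>i<k. \<alpha> i *\<^sub>R g i | \<alpha>. \<forall>i<k. \<bar>\<alpha> i\<bar> \<le> 1}
    \<and> convex {\<Sum>i<k. \<alpha> i *\<^sub>R g i | \<alpha>. \<forall>i<k. \<bar>\<alpha> i\<bar> \<le> 1}"
proof (induction k)
  case 0
  then show ?case by simp
next
  case (Suc k)
  define Z where "Z = {\<Sum>i<k. \<alpha> i *\<^sub>R g i | \<alpha>. \<forall>i<k. \<bar>\<alpha> i\<bar> \<le> 1}"
  define segment where "segment = (\<lambda>a. a *\<^sub>R g k) ` {-1..1}"
  have Suc_eq: "{\<Sum>i<Suc k. \<alpha> i *\<^sub>R g i | \<alpha>. \<forall>i<Suc k. \<bar>\<alpha> i\<bar> \<le> 1} = (\<Union>x\<in>Z. \<Union>y\<in>segment. {x + y})"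
  proof (intro set_eqI iffI)
    fix z assume "z \<in> {\<Sum>i<Suc k. \<alpha> i *\<^sub>R g i | \<alpha>. \<forall>i<Suc k. \<bar>\<alpha> i\<bar> \<le> 1}"
    then obtain \<alpha> where z: "z = (\<Sum>i<k. \<alpha> i *\<^sub>R g i) + \<alpha> k *\<^sub>R g k"
      and \<alpha>: "\<forall>i<Suc k. \<bar>\<alpha> i\<bar> \<le> 1"
      by auto
    have "(\<Sum>i<k. \<alpha> i *\<^sub>R g i) \<in> Z"
      unfolding Z_def using \<alpha> by auto
    moreover have "\<alpha> k *\<^sub>R g k \<in> segment"
      unfolding segment_def using \<alpha> by (intro imageI) (simp add: abs_le_iff)
    ultimately show "z \<in> (\<Union>x\<in>Z. \<Union>y\<in>segment. {x + y})"
      unfolding z by blast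
  next
    fix z assume "z \<in> (\<Union>x\<in>Z. \<Union>y\<in>segment. {x + y})"
    then obtain \<alpha> b where \<alpha>: "\<forall>i<k. \<bar>\<alpha> i\<bar> \<le> 1" and b: "\<bar>b\<bar> \<le> 1"
      and z: "z = (\<Sum>i<k. \<alpha> i *\<^sub>R g i) + b *\<^sub>R g k"
      unfolding Z_def segment_def by (auto simp: abs_le_iff)
    have "z = (\<Sum>i<Suc k. (\<alpha>(k := b)) i *\<^sub>R g i)"
      unfolding z by simp
    moreover have "\<forall>i<Suc k. \<bar>(\<alpha>(k := b)) i\<bar> \<le> 1"
      using \<alpha> b by (simp add: less_Suc_eq)
    ultimately show "z \<in> {\<Sum>i<Suc k. \<alpha> i *\<^sub>R g i | \<alpha>. \<forall>i<Suc k. \<bar>\<alpha> i\<bar> \<le> 1}"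
      by blast
  qed
  have "compact segment"
    unfolding segment_def by (intro compact_continuous_image continuous_intros) simp
  moreover have "convex segment"
    unfolding segment_def by (intro convex_linear_image linear_scaleR_left) simp
  moreover have "compact Z" "convex Z"
    using Suc.IH unfolding Z_def by auto
  ultimately show ?case
    unfolding Suc_eq by (simp add: compact_sums' convex_sums)
qed

lemma zonotope_compact_convex:
  fixes S :: "'a::euclidean_space set"
  assumes "zonotope S"
  shows "compact S" "convex S" "S \<noteq> {}"
proof -
  obtain c gs where S: "S = (+) c ` {\<Sum>i<length gs. \<alpha> i *\<^sub>R gs ! i | \<alpha>. \<forall>i<length gs. \<bar>\<alpha> i\<bar> \<le> 1}"
    using assms unfolding zonotope_def by (auto simp: image_Collect)
  then show "compact S" "convex S"
    using compact_convex_generator_sums[of "(!) gs" "length gs"]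
    by (auto intro: compact_translation convex_translation)
  have "(\<Sum>i<length gs. (\<lambda>_. 0) i *\<^sub>R gs ! i) \<in> {\<Sum>i<length gs. \<alpha> i *\<^sub>R gs ! i | \<alpha>. \<forall>i<length gs. \<bar>\<alpha> i\<bar> \<le> 1}"
    by (intro CollectI exI[where x="\<lambda>_. 0"]) simp
  then have "c + (\<Sum>i<length gs. (\<lambda>_. 0) i *\<^sub>R gs ! i) \<in> S"
    unfolding S by (rule imageI)
  then show "S \<noteq> {}"
    by blast
qed

lemma lin_image_eq_image: "lin_image M S = (\<lambda>x. M *v x) ` S"
  unfolding lin_image_def by auto

lemma compact_lin_image: "compact S \<Longrightarrow> compact (lin_image M S)"
  unfolding lin_image_eq_image by (intro compact_continuous_image linear_continuous_on matrix_vector_mul_bounded_linear)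

lemma mem_lin_image_mat_exp_minus_iff:
  fixes X :: "real^'n^'n"
  shows "x \<in> lin_image (mat_exp (- X)) S \<longleftrightarrow> mat_exp X *v x \<in> S"
proof -
  have inverse: "mat_exp (- X) *v (mat_exp X *v x) = x" "mat_exp X *v (mat_exp (- X) *v s) = s" for x s
    using mat_exp_minus_mult[of X] mat_exp_minus_mult[of "- X"] by (simp_all add: matrix_vector_mul_assoc)
  show ?thesis
  proof
    assume "x \<in> lin_image (mat_exp (- X)) S"
    then show "mat_exp X *v x \<in> S"
      unfolding lin_image_def using inverse(2) by auto
  next
    assume "mat_exp X *v x \<in> S"
    then show "x \<in> lin_image (mat_exp (- X)) S"
      unfolding lin_image_def using inverse(1)[of x] by (intro CollectI exI[of _ "mat_exp X *v x"]) simp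
  qed
qed

lemma mem_mink_diff_iff: "s \<in> X \<ominus>\<^sub>M Q \<longleftrightarrow> (\<forall>q\<in>Q. s + q \<in> X)"
  unfolding mink_diff_def mink_sum_def by auto

lemma mem_mink_diff_mink_sum_uminus_iff:
  fixes y :: "'a::ab_group_add"
  shows "y \<in> (X \<ominus>\<^sub>M Q) \<oplus>\<^sub>M uminus ` P \<longleftrightarrow> (\<exists>p\<in>P. \<forall>q\<in>Q. y + p + q \<in> X)"
proof
  assume "y \<in> (X \<ominus>\<^sub>M Q) \<oplus>\<^sub>M uminus ` P"
  then obtain z p where "z \<in> X \<ominus>\<^sub>M Q" "p \<in> P" "y = z - p"
    unfolding mink_sum_def by auto
  then show "\<exists>p\<in>P. \<forall>q\<in>Q. y + p + q \<in> X"
    by (auto simp: mem_mink_diff_iff intro!: bexI[of _ p])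
next
  assume "\<exists>p\<in>P. \<forall>q\<in>Q. y + p + q \<in> X"
  then obtain p where "p \<in> P" "y + p \<in> X \<ominus>\<^sub>M Q"
    by (auto simp: mem_mink_diff_iff)
  then show "y \<in> (X \<ominus>\<^sub>M Q) \<oplus>\<^sub>M uminus ` P"
    unfolding mink_sum_def by force
qed

lemma bilinear_matrix_vector_mult_flip: "bilinear (\<lambda>(x::real^'m) (M::real^'m^'n). M *v x)"
  unfolding bilinear_def
  by (auto intro!: linearI simp: matrix_vector_right_distrib matrix_vector_mult_add_rdistrib
      matrix_vector_mult_scaleR scaleR_matrix_vector_assoc)

lemma integrable_on_matrix_vector_mult:
  fixes M :: "real \<Rightarrow> real^'m^'n" and v :: "real \<Rightarrow> real^'m"
  assumes "continuous_on {a..b} M" "v \<in> borel_measurable (lebesgue_on {a..b})" "bounded (v ` {a..b})"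
  shows "(\<lambda>\<theta>. M \<theta> *v v \<theta>) integrable_on {a..b}"
  using absolutely_integrable_bounded_measurable_product[OF bilinear_matrix_vector_mult_flip assms(2) _ assms(3)
      absolutely_integrable_continuous_real[OF assms(1)]]
  by (simp add: absolutely_integrable_on_def)

lemma integrable_on_convolution_trajectory:
  fixes A :: "real^'n^'n"
  assumes "s \<in> trajectories t S" "bounded S"
  shows "(\<lambda>\<theta>. mat_exp ((t - \<theta>) *\<^sub>R A) *v s \<theta>) integrable_on {0..t}"
proof (rule integrable_on_matrix_vector_mult)
  have "continuous_on {0..t} (\<lambda>\<theta>. t - \<theta>)"
    by (intro continuous_intros)
  from continuous_on_compose[OF this continuous_on_mat_exp_scaleR]
  show "continuous_on {0..t} (\<lambda>\<theta>. mat_exp ((t - \<theta>) *\<^sub>R A))"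
    by (simp add: comp_def)
qed (use assms in \<open>auto simp: trajectories_def intro: bounded_subset[OF assms(2)]\<close>)

lemma matrix_image_trajectory:
  assumes "u \<in> trajectories T K" "t \<le> T"
  shows "(\<lambda>\<theta>. M *v u \<theta>) \<in> trajectories t (lin_image M K)"
proof -
  have "u \<in> borel_measurable (lebesgue_on {0..T})"
    using assms(1) unfolding trajectories_def by blast
  then have "u \<in> borel_measurable (lebesgue_on {0..t})"
    by (rule measurable_restrict_mono) (use assms(2) in auto)
  moreover have "(\<lambda>x. M *v x) \<in> borel_measurable borel"
    by (intro borel_measurable_continuous_onI linear_continuous_on matrix_vector_mul_bounded_linear)
  ultimately have "(\<lambda>\<theta>. M *v u \<theta>) \<in> borel_measurable (lebesgue_on {0..t})"
    by (rule measurable_compose)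
  then show ?thesis
    using assms unfolding trajectories_def lin_image_def by auto
qed

lemma matrix_trajectory_lift:
  fixes M :: "real^'m^'n"
  assumes K: "compact K" "convex K" "K \<noteq> {}"
    and s: "s \<in> trajectories t (lin_image M K)" and "t \<le> T"
  obtains u where "u \<in> trajectories T K" "\<And>\<theta>. \<theta> \<in> {0..t} \<Longrightarrow> M *v u \<theta> = s \<theta>"
proof -
  obtain f where f: "f \<in> borel_measurable borel" "\<And>y. y \<in> lin_image M K \<Longrightarrow> f y \<in> K \<and> M *v f y = y"
    using measurable_selection_linear_image[OF matrix_vector_mul_bounded_linear K(1,2)]
    unfolding lin_image_eq_image by blast
  obtain k0 where k0: "k0 \<in> K"
    using K(3) by blast
  have s_meas: "s \<in> borel_measurable (lebesgue_on {0..t})" and s_in: "\<And>\<theta>. \<theta> \<in> {0..t} \<Longrightarrow> s \<theta> \<in> lin_image M K"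
    using s unfolding trajectories_def by auto
  (* shifted by k0 so that the case distinction has the zero else-branch required by borel_measurable_if_I *)
  define u where "u \<theta> = (if \<theta> \<in> {0..t} then f (s \<theta>) - k0 else 0) + k0" for \<theta>
  have "(\<lambda>\<theta>. f (s \<theta>) - k0) \<in> borel_measurable (lebesgue_on {0..t})"
    using measurable_compose[OF s_meas f(1)] by (intro borel_measurable_diff) auto
  then have "(\<lambda>\<theta>. if \<theta> \<in> {0..t} then f (s \<theta>) - k0 else 0) \<in> borel_measurable lebesgue"
    by (rule borel_measurable_if_I) simp
  then have "u \<in> borel_measurable (lebesgue_on {0..T})"
    unfolding u_def by (intro measurable_restrict_space1 borel_measurable_add) auto
  moreover have "\<forall>\<theta>\<in>{0..T}. u \<theta> \<in> K"
    using f(2) s_in k0 unfolding u_def by auto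
  moreover have "M *v u \<theta> = s \<theta>" if "\<theta> \<in> {0..t}" for \<theta>
    using f(2)[OF s_in[OF that]] that unfolding u_def by auto
  ultimately show ?thesis
    using that unfolding trajectories_def by blast
qed

lemma particular_solution_lin_image:
  fixes A :: "real^'n^'n" and M :: "real^'m^'n"
  assumes K: "compact K" "convex K" "K \<noteq> {}" and "t \<le> T"
  shows "particular_solution A (lin_image M K) t =
    (\<lambda>u. integral {0..t} (\<lambda>\<theta>. mat_exp ((t - \<theta>) *\<^sub>R A) *v (M *v u \<theta>))) ` trajectories T K"
proof (intro set_eqI iffI)
  fix z assume "z \<in> particular_solution A (lin_image M K) t"
  then obtain s where s: "s \<in> trajectories t (lin_image M K)"
    and z: "z = integral {0..t} (\<lambda>\<theta>. mat_exp ((t - \<theta>) *\<^sub>R A) *v s \<theta>)"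
    unfolding particular_solution_def by blast
  obtain u where u: "u \<in> trajectories T K" "\<And>\<theta>. \<theta> \<in> {0..t} \<Longrightarrow> M *v u \<theta> = s \<theta>"
    using matrix_trajectory_lift[OF K s \<open>t \<le> T\<close>] by blast
  have "z = integral {0..t} (\<lambda>\<theta>. mat_exp ((t - \<theta>) *\<^sub>R A) *v (M *v u \<theta>))"
    unfolding z by (rule integral_cong) (simp add: u(2))
  then show "z \<in> (\<lambda>u. integral {0..t} (\<lambda>\<theta>. mat_exp ((t - \<theta>) *\<^sub>R A) *v (M *v u \<theta>))) ` trajectories T K"
    using u(1) by blast
next
  fix z assume "z \<in> (\<lambda>u. integral {0..t} (\<lambda>\<theta>. mat_exp ((t - \<theta>) *\<^sub>R A) *v (M *v u \<theta>))) ` trajectories T K"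
  then obtain u where "u \<in> trajectories T K"
    and z: "z = integral {0..t} (\<lambda>\<theta>. mat_exp ((t - \<theta>) *\<^sub>R A) *v (M *v u \<theta>))"
    by blast
  then have Mu: "(\<lambda>\<theta>. M *v u \<theta>) \<in> trajectories t (lin_image M K)"
    using matrix_image_trajectory \<open>t \<le> T\<close> by blast
  show "z \<in> particular_solution A (lin_image M K) t"
    unfolding particular_solution_def z by (intro CollectI exI[where x="\<lambda>\<theta>. M *v u \<theta>"] conjI refl Mu)
qed

lemma xi_eq_convolutions:
  fixes A :: "real^'n^'n" and B :: "real^'m^'n" and E :: "real^'r^'n"
  assumes "compact U" "compact W" "u \<in> trajectories T U" "w \<in> trajectories T W" "t \<le> T"
  shows "xi A B E t x0 u w = mat_exp (t *\<^sub>R A) *v x0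
    + integral {0..t} (\<lambda>\<theta>. mat_exp ((t - \<theta>) *\<^sub>R A) *v (B *v u \<theta>))
    + integral {0..t} (\<lambda>\<theta>. mat_exp ((t - \<theta>) *\<^sub>R A) *v (E *v w \<theta>))"
proof -
  have "(\<lambda>\<theta>. B *v u \<theta>) \<in> trajectories t (lin_image B U)"
    using assms(3,5) by (rule matrix_image_trajectory)
  then have int_u: "(\<lambda>\<theta>. mat_exp ((t - \<theta>) *\<^sub>R A) *v (B *v u \<theta>)) integrable_on {0..t}"
    by (rule integrable_on_convolution_trajectory[OF _ compact_imp_bounded[OF compact_lin_image[OF assms(1)]]])
  have "(\<lambda>\<theta>. E *v w \<theta>) \<in> trajectories t (lin_image E W)"
    using assms(4,5) by (rule matrix_image_trajectory)
  then have int_w: "(\<lambda>\<theta>. mat_exp ((t - \<theta>) *\<^sub>R A) *v (E *v w \<theta>)) integrable_on {0..t}"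
    by (rule integrable_on_convolution_trajectory[OF _ compact_imp_bounded[OF compact_lin_image[OF assms(2)]]])
  show ?thesis
    unfolding xi_def using int_u int_w by (simp add: matrix_vector_right_distrib integral_add add.assoc)
qed

theorem proposition5:
  fixes A :: "real^'n^'n" and B :: "real^'m^'n" and E :: "real^'r^'n"
    and U :: "(real^'m) set" and W :: "(real^'r) set" and Xend :: "(real^'n) set"
    and t_end t :: real
  assumes "zonotope U" and "zonotope W" and "polytope_H Xend"
    and "t \<in> {0..t_end}"
  shows "EA_backward_reach A B E U W Xend t_end t =
         lin_image (mat_exp ((- t) *\<^sub>R A))
           ((Xend \<ominus>\<^sub>M particular_solution A (lin_image E W) t)
              \<oplus>\<^sub>M uminus ` particular_solution A (lin_image B U) t)"
proof (rule set_eqI)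
  fix x0
  let ?S = "(Xend \<ominus>\<^sub>M particular_solution A (lin_image E W) t) \<oplus>\<^sub>M uminus ` particular_solution A (lin_image B U) t"
  define IU where "IU u = integral {0..t} (\<lambda>\<theta>. mat_exp ((t - \<theta>) *\<^sub>R A) *v (B *v u \<theta>))" for u
  define IW where "IW w = integral {0..t} (\<lambda>\<theta>. mat_exp ((t - \<theta>) *\<^sub>R A) *v (E *v w \<theta>))" for w
  note U = zonotope_compact_convex[OF assms(1)] and W = zonotope_compact_convex[OF assms(2)]
  have t: "t \<le> t_end"
    using assms(4) by simp
  have "x0 \<in> EA_backward_reach A B E U W Xend t_end t \<longleftrightarrow>
      (\<exists>u\<in>trajectories t_end U. \<forall>w\<in>trajectories t_end W. mat_exp (t *\<^sub>R A) *v x0 + IU u + IW w \<in> Xend)"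
    unfolding EA_backward_reach_def IU_def IW_def using U W t by (simp add: xi_eq_convolutions)
  also have "\<dots> \<longleftrightarrow> mat_exp (t *\<^sub>R A) *v x0 \<in>
      (Xend \<ominus>\<^sub>M IW ` trajectories t_end W) \<oplus>\<^sub>M uminus ` IU ` trajectories t_end U"
    by (simp add: mem_mink_diff_mink_sum_uminus_iff)
  also have "\<dots> \<longleftrightarrow> x0 \<in> lin_image (mat_exp ((- t) *\<^sub>R A)) ?S"
    using U W t unfolding IU_def IW_def
    by (simp add: mem_lin_image_mat_exp_minus_iff particular_solution_lin_image)
  finally show "x0 \<in> EA_backward_reach A B E U W Xend t_end t \<longleftrightarrow> x0 \<in> lin_image (mat_exp ((- t) *\<^sub>R A)) ?S" .
qed

end
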